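(* Let $\mathcal{O}\subset\mathbb{R}^n$ be open and let $Y_1,\dots,Y_k$ be Lipschitz vector fields on $\mathcal{O}$ satisfying $[Y_i,Y_j]=0$ (almost everywhere) for $1\le i,j\le k$. Let $K\subset\mathcal{O}$ be compact and $\delta>0$, and let $y=y(t,x_0)=y(t_1,\dots,t_k,x_0)$, defined for $x_0\in K$ and $|t_j|<\delta$, be the solution of $$\frac{\partial y}{\partial t_j}=Y_j(y),\quad 1\le j\le k,\qquad y(0,x_0)=x_0,$$ which is Lipschitz in $(t,x_0)$. Then for each $j\in\{1,\dots,k\}$, $\frac{\partial}{\partial t_j}y(t,x)$ is Lipschitz in $(t,x)$.
   Context: For Lipschitz vector fields the bracket $[Y_i,Y_j]$ has $L^\infty$ coefficients and the condition $[Y_i,Y_j]=0$ is understood almost everywhere. For such commuting Lipschitz vector fields, for every compact $K\subset\mathcal{O}$ there is $\delta>0$ such that a unique solution $y$ of the stated system exists for $x_0\in K$, $|t_j|<\delta$, and it is Lipschitz in $(t,x_0)$. *)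

theory Defs
  imports "HOL-Analysis.Analysis"
begin

text \<open>The condition [Y_i,Y_j] = 0 a.e. on O
  (for Lipschitz fields, which are differentiable a.e. by Rademacher) is:\<close>
definition bracket_zero_ae ::
  "(real^('n::finite)) set \<Rightarrow> (real^'n \<Rightarrow> real^'n) \<Rightarrow> (real^'n \<Rightarrow> real^'n) \<Rightarrow> bool"
  where "bracket_zero_ae U Yi Yj \<longleftrightarrow>
    (AE x in lebesgue. x \<in> U \<longrightarrow>
       (\<exists>DYi DYj. (Yi has_derivative DYi) (at x) \<and> (Yj has_derivative DYj) (at x)
                 \<and> DYj (Yi x) - DYi (Yj x) = 0))"

definition partial_t :: "(real^'k \<Rightarrow> 'a::real_normed_vector) \<Rightarrow> 'k::finite \<Rightarrow> real^'k \<Rightarrow> 'a"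
  where "partial_t f j t = vector_derivative (\<lambda>s. f (t + s *\<^sub>R axis j 1)) (at 0)"

definition tcube :: "real \<Rightarrow> (real^'k::finite) set"
  where "tcube \<delta> = {t. \<forall>j. \<bar>t $ j\<bar> < \<delta>}"

end

theory Submission
  imports Defs
begin

text \<open>Along a solution the equation itself identifies \<open>\<partial>y/\<partial>t\<^sub>j\<close> with \<open>Y\<^sub>j \<circ> y\<close>, a
  composition of Lipschitz maps. The commutation, compactness and initial-value
  hypotheses are only needed for the existence of \<open>y\<close>, which is assumed here.\<close>

lemma partial_t_eqI:
  assumes "((\<lambda>s. f (t + s *\<^sub>R axis j 1)) has_vector_derivative v) (at 0)"
  shows "partial_t f j t = v"
  using assms unfolding partial_t_def by (rule vector_derivative_at)

lemma lipschitz_on_partial_t_solution: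
  fixes y :: "real^'k::finite \<Rightarrow> 'a::metric_space \<Rightarrow> 'b::real_normed_vector"
    and Z :: "'b \<Rightarrow> 'b"
  assumes y_lip: "C-lipschitz_on (S \<times> X) (\<lambda>(t, x). y t x)"
    and Z_lip: "D-lipschitz_on V Z"
    and y_in: "\<And>t x. t \<in> S \<Longrightarrow> x \<in> X \<Longrightarrow> y t x \<in> V"
    and y_ode: "\<And>t x. t \<in> S \<Longrightarrow> x \<in> X \<Longrightarrow>
      ((\<lambda>s. y (t + s *\<^sub>R axis j 1) x) has_vector_derivative Z (y t x)) (at 0)"
  shows "(D * C)-lipschitz_on (S \<times> X) (\<lambda>(t, x). partial_t (\<lambda>s. y s x) j t)"
proof -
  have "(\<lambda>(t, x). y t x) ` (S \<times> X) \<subseteq> V"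
    using y_in by auto
  then have "(D * C)-lipschitz_on (S \<times> X) (\<lambda>p. Z ((\<lambda>(t, x). y t x) p))"
    by (intro lipschitz_on_compose2 y_lip lipschitz_on_subset[OF Z_lip])
  moreover have "\<And>p. p \<in> S \<times> X \<Longrightarrow>
      (\<lambda>(t, x). partial_t (\<lambda>s. y s x) j t) p = Z ((\<lambda>(t, x). y t x) p)"
    using y_ode by (auto intro: partial_t_eqI)
  ultimately show ?thesis
    by (rule lipschitz_on_transform)
qed

theorem corollary2p2:
  fixes U :: "(real^'n) set" and Y :: "'k::finite \<Rightarrow> real^'n \<Rightarrow> real^'n"
    and K :: "(real^'n) set" and \<delta> :: real
    and y :: "real^'k \<Rightarrow> real^'n \<Rightarrow> real^'n"
  assumes O_open: "open U"
    and Y_lip: "\<And>j. \<exists>L. L-lipschitz_on U (Y j)"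
    and commute: "\<And>i j. bracket_zero_ae U (Y i) (Y j)"
    and K_compact: "compact K" and K_sub: "K \<subseteq> U"
    and delta_pos: "\<delta> > 0"
    and y_in: "\<And>t x0. t \<in> tcube \<delta> \<Longrightarrow> x0 \<in> K \<Longrightarrow> y t x0 \<in> U"
    and y_ode: "\<And>t x0 j. t \<in> tcube \<delta> \<Longrightarrow> x0 \<in> K \<Longrightarrow>
        ((\<lambda>s. y (t + s *\<^sub>R axis j 1) x0) has_vector_derivative Y j (y t x0)) (at 0)"
    and y_init: "\<And>x0. x0 \<in> K \<Longrightarrow> y 0 x0 = x0"
    and y_lip: "\<exists>L. L-lipschitz_on (tcube \<delta> \<times> K) (\<lambda>(t, x0). y t x0)"
  shows "\<forall>j. \<exists>L. L-lipschitz_on (tcube \<delta> \<times> K) (\<lambda>(t, x). partial_t (\<lambda>s. y s x) j t)"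
proof
  fix j
  obtain C where "C-lipschitz_on (tcube \<delta> \<times> K) (\<lambda>(t, x0). y t x0)"
    using y_lip by blast
  moreover obtain D where "D-lipschitz_on U (Y j)"
    using Y_lip by blast
  ultimately have "(D * C)-lipschitz_on (tcube \<delta> \<times> K) (\<lambda>(t, x). partial_t (\<lambda>s. y s x) j t)"
    using y_in y_ode by (rule lipschitz_on_partial_t_solution)
  then show "\<exists>L. L-lipschitz_on (tcube \<delta> \<times> K) (\<lambda>(t, x). partial_t (\<lambda>s. y s x) j t)"
    by blast
qed

end
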